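(* Let $|\mu\rangle,|\bar\mu\rangle\in\mathbb{C}^2\otimes\mathbb{C}^2$ be two-qubit states with squared Schmidt coefficients $\left(\frac{1}{1+a},\frac{a}{1+a}\right)$ and $\left(\frac{1}{1+\bar a},\frac{\bar a}{1+\bar a}\right)$ respectively, where $a,\bar a\in(0,1)$ and $a>\bar a$. Let $d\ge 3$ be odd. The following are equivalent: (i) there exist states $|\lambda\rangle,|\bar\lambda\rangle\in\mathbb{C}^d\otimes\mathbb{C}^d$ of full Schmidt rank $d$ such that $|\mu\rangle\otimes|\lambda\rangle$ can be transformed into $|\bar\mu\rangle\otimes|\bar\lambda\rangle$ by a local unitary; (ii) $\bar a=a^{d_1/d_2}$ for two odd natural numbers $d_1,d_2$ with $d\ge d_1>d_2\ge 1$.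
   Context: The state $|\mu\rangle\otimes|\lambda\rangle$ is regarded as a bipartite state between two parties, each holding a $2$-dimensional and a $d$-dimensional subsystem. A local unitary is $U_A\otimes U_B$ with $U_A,U_B\in\mathrm{U}(2d)$, each acting jointly on the corresponding party's two subsystems. *)

theory Defs
  imports Complex_Main
begin

text \<open>A bipartite pure state on C^m (x) C^n is represented by its coefficient
 matrix C, psi = sum_{i<m, j<n} C i j |i>|j>. Only entries with i<m, j<n matter.\<close>

type_synonym cmat = "nat \<Rightarrow> nat \<Rightarrow> complex"

definition is_state :: "nat \<Rightarrow> nat \<Rightarrow> cmat \<Rightarrow> bool" where
  "is_state m n C \<longleftrightarrow> (\<Sum>i<m. \<Sum>j<n. (cmod (C i j))\<^sup>2) = 1"

definition unitary :: "nat \<Rightarrow> cmat \<Rightarrow> bool" where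
  "unitary n U \<longleftrightarrow> (\<forall>i<n. \<forall>j<n. (\<Sum>k<n. cnj (U k i) * U k j) = (if i = j then 1 else 0))"

definition local_apply :: "nat \<Rightarrow> nat \<Rightarrow> cmat \<Rightarrow> cmat \<Rightarrow> cmat \<Rightarrow> cmat" where
  "local_apply m n UA UB C = (\<lambda>i j. \<Sum>k<m. \<Sum>l<n. UA i k * UB j l * C k l)"

text \<open>Schmidt decomposition of a state on C^d (x) C^d with squared Schmidt
 coefficients p 0, ..., p (d-1):  psi = sum_k sqrt(p k) (U e_k) (x) (V e_k)
 with U, V unitary (i.e. orthonormal bases).\<close>
definition schmidt_sq :: "nat \<Rightarrow> cmat \<Rightarrow> (nat \<Rightarrow> real) \<Rightarrow> bool" where
  "schmidt_sq d C p \<longleftrightarrow> (\<forall>k<d. p k \<ge> 0) \<and>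
     (\<exists>U V. unitary d U \<and> unitary d V \<and>
        (\<forall>i<d. \<forall>j<d. C i j = (\<Sum>k<d. U i k * complex_of_real (sqrt (p k)) * V j k)))"

definition full_schmidt_rank :: "nat \<Rightarrow> cmat \<Rightarrow> bool" where
  "full_schmidt_rank d C \<longleftrightarrow> (\<exists>p. schmidt_sq d C p \<and> (\<forall>k<d. p k > 0))"

text \<open>Coefficient matrix of |mu> (x) |lambda> (mu on C^m (x) C^m, lambda on C^n (x) C^n)
 regarded as a bipartite state on C^(mn) (x) C^(mn), party A holding index (i,k)
 encoded as i*n+k.\<close>
definition kron :: "nat \<Rightarrow> cmat \<Rightarrow> cmat \<Rightarrow> cmat" where
  "kron n M L = (\<lambda>r c. M (r div n) (c div n) * L (r mod n) (c mod n))"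

end

theory Submission
  imports Defs "HOL-Combinatorics.Permutations" "Jordan_Normal_Form.Determinant"
begin

text \<open>A local unitary maps a state with Schmidt form \<open>C = A diag(\<sigma>) B\<^sup>T\<close> to one with Schmidt
  form \<open>(U\<^sub>A A) diag(\<sigma>) (U\<^sub>B B)\<^sup>T\<close>, so the power sums \<open>tr (C C\<^sup>H)\<^sup>k = \<Sum> \<sigma>\<^sup>2\<^sup>k\<close> are invariant, and
  positive numbers are determined by their power sums. Hence \<open>\<mu> \<otimes> \<lambda>\<close> and \<open>\<mu>bar \<otimes> \<lambda>bar\<close> have the
  same squared Schmidt coefficients \<open>q\<^sub>j/(1+a), a q\<^sub>j/(1+a)\<close>; after taking \<open>-ln\<close>, the multiset
  \<open>{l\<^sub>j, l\<^sub>j + s}\<close> with \<open>s = -ln a\<close> equals \<open>{m\<^sub>j, m\<^sub>j + t}\<close> with \<open>t = -ln abar\<close>.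
  If \<open>t/s = q/p\<close> in lowest terms (\<open>p = 0, q = 1\<close> if \<open>t/s\<close> is irrational), there is an integer
  valued \<open>N\<close> on \<open>\<real>\<close> with \<open>N (w + s) = N w - p\<close> and \<open>N (w + t) = N w - q\<close>. Summing \<open>(-1)\<^sup>N\<close> and
  \<open>N (-1)\<^sup>N\<close> over both multisets shows that \<open>p, q\<close> are odd and \<open>p A = q B\<close> for an odd \<open>A\<close> with
  \<open>|A| \<le> d\<close>, so \<open>q \<le> d\<close>.

  Conversely, if \<open>abar = a\<^bsup>d\<^sub>1/d\<^sub>2\<^esup>\<close>, write \<open>a = \<tau>\<^bsup>d\<^sub>2\<^esup>\<close>, \<open>abar = \<tau>\<^bsup>d\<^sub>1\<^esup>\<close> and choose \<open>\<lambda>, \<lambda>bar\<close> with coefficients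
  proportional to powers of \<open>\<tau>\<close> whose exponent lists make the two product states have the same
  Schmidt coefficients; states with the same Schmidt coefficients are related by a local
  unitary.\<close>

section \<open>Matrices on the index range \<open>{..<n}\<close>\<close>

definition cmat_mult :: "nat \<Rightarrow> cmat \<Rightarrow> cmat \<Rightarrow> cmat" where
  "cmat_mult n A B = (\<lambda>i j. \<Sum>k<n. A i k * B k j)"

definition cmat_id :: cmat where
  "cmat_id = (\<lambda>i j. if i = j then 1 else 0)"

definition cmat_adj :: "cmat \<Rightarrow> cmat" where
  "cmat_adj U = (\<lambda>i j. cnj (U j i))"

fun cmat_pow :: "nat \<Rightarrow> cmat \<Rightarrow> nat \<Rightarrow> cmat" where
  "cmat_pow n G 0 = cmat_id"
| "cmat_pow n G (Suc k) = cmat_mult n G (cmat_pow n G k)"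

definition cmat_trace :: "nat \<Rightarrow> cmat \<Rightarrow> complex" where
  "cmat_trace n G = (\<Sum>i<n. G i i)"

definition gram :: "nat \<Rightarrow> cmat \<Rightarrow> cmat" where
  "gram n C = cmat_mult n C (cmat_adj C)"

definition diag_conj :: "nat \<Rightarrow> cmat \<Rightarrow> (nat \<Rightarrow> complex) \<Rightarrow> cmat" where
  "diag_conj n A f = (\<lambda>i j. \<Sum>l<n. A i l * f l * cnj (A j l))"

lemma unitaryD:
  "unitary n U \<Longrightarrow> i < n \<Longrightarrow> j < n \<Longrightarrow> (\<Sum>k<n. cnj (U k i) * U k j) = (if i = j then 1 else 0)"
  unfolding unitary_def by blast

lemma sum_unitary_delta:
  assumes "unitary n U" "i < n"
  shows "(\<Sum>j<n. f j * (\<Sum>k<n. cnj (U k i) * U k j)) = f i"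
    and "(\<Sum>j<n. f j * (\<Sum>k<n. cnj (U k j) * U k i)) = f i"
proof -
  have "(\<Sum>j<n. f j * (\<Sum>k<n. cnj (U k i) * U k j)) = (\<Sum>j<n. if j = i then f j else 0)"
    using assms by (intro sum.cong refl) (auto simp: unitaryD)
  then show "(\<Sum>j<n. f j * (\<Sum>k<n. cnj (U k i) * U k j)) = f i"
    using assms(2) by simp
  have "(\<Sum>j<n. f j * (\<Sum>k<n. cnj (U k j) * U k i)) = (\<Sum>j<n. if j = i then f j else 0)"
    using assms by (intro sum.cong refl) (auto simp: unitaryD)
  then show "(\<Sum>j<n. f j * (\<Sum>k<n. cnj (U k j) * U k i)) = f i"
    using assms(2) by simp
qed

lemma sum_swap3:
  "(\<Sum>c\<in>C. \<Sum>k\<in>K. \<Sum>l\<in>L. f c k l) = (\<Sum>k\<in>K. \<Sum>l\<in>L. \<Sum>c\<in>C. f c k l)"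
  by (subst sum.swap) (simp only: sum.swap[of _ C])

lemma sum_product_scaled:
  "(\<Sum>k\<in>A. \<Sum>l\<in>B. f k * s * g l) = (\<Sum>k\<in>A. f k) * s * (\<Sum>l\<in>B. g l :: 'a::comm_semiring_0)"
  by (simp add: sum_product sum_distrib_left sum_distrib_right mult_ac)

lemma unitary_cmat_id: "unitary n cmat_id"
  unfolding unitary_def
proof (intro allI impI)
  fix i j assume "i < n" "j < n"
  have "(\<Sum>k<n. cnj (cmat_id k i) * cmat_id k j) = (\<Sum>k<n. if k = i then cmat_id i j else 0)"
    by (intro sum.cong refl) (simp add: cmat_id_def)
  then show "(\<Sum>k<n. cnj (cmat_id k i) * cmat_id k j) = (if i = j then 1 else 0)"
    using \<open>i < n\<close> by (simp add: cmat_id_def)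
qed

lemma unitary_cmat_mult:
  assumes U: "unitary n U" and A: "unitary n A"
  shows "unitary n (cmat_mult n U A)"
  unfolding unitary_def
proof (intro allI impI)
  fix i j assume i: "i < n" and j: "j < n"
  have "(\<Sum>r<n. cnj (cmat_mult n U A r i) * cmat_mult n U A r j)
      = (\<Sum>r<n. \<Sum>k<n. \<Sum>k'<n. cnj (A k i) * A k' j * (cnj (U r k) * U r k'))"
    unfolding cmat_mult_def cnj_sum sum_product by (simp add: mult_ac)
  also have "\<dots> = (\<Sum>k<n. cnj (A k i) * (\<Sum>k'<n. A k' j * (\<Sum>r<n. cnj (U r k) * U r k')))"
    by (subst sum_swap3) (simp add: sum_distrib_left mult_ac)
  also have "\<dots> = (\<Sum>k<n. cnj (A k i) * A k j)"
    by (intro sum.cong refl) (subst sum_unitary_delta(1)[OF U], auto)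
  also have "\<dots> = (if i = j then 1 else 0)"
    by (rule unitaryD[OF A i j])
  finally show "(\<Sum>r<n. cnj (cmat_mult n U A r i) * cmat_mult n U A r j) = (if i = j then 1 else 0)" .
qed

text \<open>A one-sided inverse of a square matrix is two-sided; this is the only use of the
  matrix library of Jordan_Normal_Form.\<close>
lemma unitary_cmat_adj:
  assumes U: "unitary n U"
  shows "unitary n (cmat_adj U)"
proof -
  define M where "M = mat n n (\<lambda>(i, j). U i j)"
  define Mh where "Mh = mat n n (\<lambda>(i, j). cnj (U j i))"
  have M: "M \<in> carrier_mat n n" and Mh: "Mh \<in> carrier_mat n n"
    unfolding M_def Mh_def by auto
  have "Mh * M = 1\<^sub>m n"
    using U by (intro eq_matI) (auto simp: M_def Mh_def scalar_prod_def lessThan_atLeast0 unitary_def)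
  then have MMh: "M * Mh = 1\<^sub>m n"
    by (rule mat_mult_left_right_inverse[OF Mh M])
  show ?thesis
    unfolding unitary_def
  proof (intro allI impI)
    fix i j assume i: "i < n" and j: "j < n"
    have "(\<Sum>k<n. cnj (cmat_adj U k i) * cmat_adj U k j) = (M * Mh) $$ (i, j)"
      unfolding M_def Mh_def cmat_adj_def using i j by (simp add: scalar_prod_def lessThan_atLeast0)
    then show "(\<Sum>k<n. cnj (cmat_adj U k i) * cmat_adj U k j) = (if i = j then 1 else 0)"
      using MMh i j by simp
  qed
qed

lemma cmat_mult_assoc: "cmat_mult n (cmat_mult n X Y) Z = cmat_mult n X (cmat_mult n Y Z)"
  unfolding cmat_mult_def
proof (intro ext)
  fix i j
  show "(\<Sum>k<n. (\<Sum>l<n. X i l * Y l k) * Z k j) = (\<Sum>l<n. X i l * (\<Sum>k<n. Y l k * Z k j))"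
    by (simp add: sum_distrib_left sum_distrib_right mult.assoc) (rule sum.swap)
qed

lemma cmat_mult_adj_cancel:
  assumes "unitary n A" "K < n"
  shows "cmat_mult n (cmat_mult n X (cmat_adj A)) A r K = X r K"
proof -
  have "cmat_mult n (cmat_mult n X (cmat_adj A)) A r K = (\<Sum>l<n. X r l * (\<Sum>k<n. cnj (A k l) * A k K))"
    unfolding cmat_mult_assoc by (simp add: cmat_mult_def cmat_adj_def)
  then show ?thesis
    using assms by (simp add: sum_unitary_delta)
qed

lemma cmat_pow_cong:
  assumes "\<forall>i<n. \<forall>j<n. G i j = G' i j" "i < n" "j < n"
  shows "cmat_pow n G k i j = cmat_pow n G' k i j"
  using assms(2,3) by (induction k arbitrary: i j) (simp_all add: cmat_mult_def assms(1))

lemma cmat_pow_diag_conj: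
  assumes A: "unitary n A" and k: "k \<ge> 1" and i: "i < n" and j: "j < n"
  shows "cmat_pow n (diag_conj n A f) k i j = diag_conj n A (\<lambda>l. f l ^ k) i j"
  using k i j
proof (induction k arbitrary: i j rule: nat_induct_at_least)
  case base
  then show ?case
    by (simp add: cmat_mult_def cmat_id_def if_distrib[of "\<lambda>x. _ * x"] cong: if_cong)
next
  case (Suc k)
  have "cmat_pow n (diag_conj n A f) (Suc k) i j
      = (\<Sum>r<n. diag_conj n A f i r * diag_conj n A (\<lambda>l. f l ^ k) r j)"
    using Suc by (simp add: cmat_mult_def)
  also have "\<dots> = (\<Sum>r<n. \<Sum>l'<n. \<Sum>l<n. A i l' * f l' * (f l ^ k * cnj (A j l)) * (cnj (A r l') * A r l))"
    unfolding diag_conj_def by (intro sum.cong refl) (simp add: sum_product mult_ac)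
  also have "\<dots> = (\<Sum>l'<n. A i l' * f l' * (\<Sum>l<n. f l ^ k * cnj (A j l) * (\<Sum>r<n. cnj (A r l') * A r l)))"
    by (subst sum_swap3) (simp add: sum_distrib_left mult.assoc)
  also have "\<dots> = diag_conj n A (\<lambda>l. f l ^ Suc k) i j"
    unfolding diag_conj_def by (intro sum.cong refl) (subst sum_unitary_delta(1)[OF A], auto)
  finally show ?case .
qed

lemma cmat_trace_diag_conj:
  assumes "unitary n A"
  shows "cmat_trace n (diag_conj n A f) = (\<Sum>l<n. f l)"
proof -
  have "cmat_trace n (diag_conj n A f) = (\<Sum>l<n. f l * (\<Sum>i<n. cnj (A i l) * A i l))"
    unfolding cmat_trace_def diag_conj_def
    by (subst sum.swap) (simp add: sum_distrib_left mult_ac)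
  also have "\<dots> = (\<Sum>l<n. f l)"
    using assms by (intro sum.cong refl) (simp add: unitaryD)
  finally show ?thesis .
qed

section \<open>Schmidt forms and local unitaries\<close>

definition schmidt_form :: "nat \<Rightarrow> cmat \<Rightarrow> cmat \<Rightarrow> (nat \<Rightarrow> real) \<Rightarrow> cmat \<Rightarrow> bool" where
  "schmidt_form n C A \<sigma> B \<longleftrightarrow>
     (\<forall>i<n. \<forall>j<n. C i j = (\<Sum>k<n. A i k * complex_of_real (\<sigma> k) * B j k))"

lemma schmidt_sq_iff:
  "schmidt_sq n C p \<longleftrightarrow> (\<forall>k<n. p k \<ge> 0) \<and>
     (\<exists>U V. unitary n U \<and> unitary n V \<and> schmidt_form n C U (\<lambda>k. sqrt (p k)) V)"
  unfolding schmidt_sq_def schmidt_form_def by blast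

lemma gram_schmidt_form:
  assumes S: "schmidt_form n C A \<sigma> B" and B: "unitary n B" and i: "i < n" and j: "j < n"
  shows "gram n C i j = diag_conj n A (\<lambda>k. complex_of_real ((\<sigma> k)\<^sup>2)) i j"
proof -
  have "gram n C i j = (\<Sum>c<n. (\<Sum>k<n. A i k * complex_of_real (\<sigma> k) * B c k) *
      cnj (\<Sum>l<n. A j l * complex_of_real (\<sigma> l) * B c l))"
    using S i j unfolding gram_def cmat_mult_def cmat_adj_def schmidt_form_def by simp
  also have "\<dots> = (\<Sum>c<n. \<Sum>k<n. \<Sum>l<n.
      (A i k * complex_of_real (\<sigma> k)) * (cnj (A j l) * complex_of_real (\<sigma> l)) * (cnj (B c l) * B c k))"
    by (intro sum.cong refl) (simp add: cnj_sum sum_product mult_ac)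
  also have "\<dots> = (\<Sum>k<n. A i k * complex_of_real (\<sigma> k) *
      (\<Sum>l<n. cnj (A j l) * complex_of_real (\<sigma> l) * (\<Sum>c<n. cnj (B c l) * B c k)))"
    by (subst sum_swap3) (simp add: sum_distrib_left mult.assoc)
  also have "\<dots> = diag_conj n A (\<lambda>k. complex_of_real ((\<sigma> k)\<^sup>2)) i j"
    unfolding diag_conj_def
    by (intro sum.cong refl) (subst sum_unitary_delta(2)[OF B], auto simp: power2_eq_square)
  finally show ?thesis .
qed

lemma trace_gram_pow:
  assumes S: "schmidt_form n C A \<sigma> B" and A: "unitary n A" and B: "unitary n B" and k: "k \<ge> 1"
  shows "cmat_trace n (cmat_pow n (gram n C) k) = (\<Sum>l<n. complex_of_real ((\<sigma> l)\<^sup>2) ^ k)"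
proof -
  let ?D = "diag_conj n A (\<lambda>l. complex_of_real ((\<sigma> l)\<^sup>2))"
  have "cmat_trace n (cmat_pow n (gram n C) k) = cmat_trace n (cmat_pow n ?D k)"
    unfolding cmat_trace_def
    by (intro sum.cong refl cmat_pow_cong) (auto simp: gram_schmidt_form[OF S B])
  also have "\<dots> = cmat_trace n (diag_conj n A (\<lambda>l. complex_of_real ((\<sigma> l)\<^sup>2) ^ k))"
    unfolding cmat_trace_def by (intro sum.cong refl) (simp add: cmat_pow_diag_conj[OF A k])
  also have "\<dots> = (\<Sum>l<n. complex_of_real ((\<sigma> l)\<^sup>2) ^ k)"
    by (rule cmat_trace_diag_conj[OF A])
  finally show ?thesis .
qed

lemma schmidt_form_local_apply:
  assumes S: "schmidt_form n C A \<sigma> B"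
    and L: "\<forall>r<n. \<forall>c<n. local_apply n n UA UB C r c = C' r c"
  shows "schmidt_form n C' (cmat_mult n UA A) \<sigma> (cmat_mult n UB B)"
  unfolding schmidt_form_def
proof (intro allI impI)
  fix r c assume r: "r < n" and c: "c < n"
  have "C' r c = (\<Sum>k<n. \<Sum>l<n. \<Sum>K<n. UA r k * A k K * complex_of_real (\<sigma> K) * (UB c l * B l K))"
    using L r c S unfolding local_apply_def schmidt_form_def
    by (auto simp: sum_distrib_left mult_ac intro!: sum.cong)
  also have "\<dots> = (\<Sum>K<n. \<Sum>k<n. \<Sum>l<n. UA r k * A k K * complex_of_real (\<sigma> K) * (UB c l * B l K))"
    by (rule sum_swap3[symmetric])
  also have "\<dots> = (\<Sum>K<n. cmat_mult n UA A r K * complex_of_real (\<sigma> K) * cmat_mult n UB B c K)"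
    unfolding cmat_mult_def by (intro sum.cong refl) (rule sum_product_scaled)
  finally show "C' r c = (\<Sum>K<n. cmat_mult n UA A r K * complex_of_real (\<sigma> K) * cmat_mult n UB B c K)" .
qed

lemma schmidt_sq_local_unitary_power_sums:
  assumes S: "schmidt_sq n C p" and S': "schmidt_sq n C' p'"
    and UA: "unitary n UA" and UB: "unitary n UB"
    and L: "\<forall>r<n. \<forall>c<n. local_apply n n UA UB C r c = C' r c"
    and k: "k \<ge> 1"
  shows "(\<Sum>l<n. p l ^ k) = (\<Sum>l<n. p' l ^ k)"
proof -
  obtain A B where A: "unitary n A" and B: "unitary n B"
    and SA: "schmidt_form n C A (\<lambda>l. sqrt (p l)) B" and p: "\<forall>l<n. p l \<ge> 0"
    using S unfolding schmidt_sq_iff by blast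
  obtain A' B' where A': "unitary n A'" and B': "unitary n B'"
    and SA': "schmidt_form n C' A' (\<lambda>l. sqrt (p' l)) B'" and p': "\<forall>l<n. p' l \<ge> 0"
    using S' unfolding schmidt_sq_iff by blast
  have "complex_of_real (\<Sum>l<n. p l ^ k) = cmat_trace n (cmat_pow n (gram n C') k)"
    using trace_gram_pow[OF schmidt_form_local_apply[OF SA L]
        unitary_cmat_mult[OF UA A] unitary_cmat_mult[OF UB B] k] p by simp
  also have "\<dots> = complex_of_real (\<Sum>l<n. p' l ^ k)"
    using trace_gram_pow[OF SA' A' B' k] p' by simp
  finally show ?thesis
    by (simp only: of_real_eq_iff)
qed

definition kron_cmat :: "nat \<Rightarrow> cmat \<Rightarrow> cmat \<Rightarrow> cmat" where
  "kron_cmat n U1 U2 = (\<lambda>r K. U1 (r div n) (K div n) * U2 (r mod n) (K mod n))"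

lemma sum_lessThan_mult:
  fixes f :: "nat \<Rightarrow> 'a::comm_monoid_add"
  shows "(\<Sum>K<m * n. f K) = (\<Sum>k<m. \<Sum>j<n. f (k * n + j))"
proof (induction m)
  case (Suc m)
  have "(\<Sum>K<Suc m * n. f K) = (\<Sum>K<m * n. f K) + (\<Sum>K\<in>{m * n..<m * n + n}. f K)"
    by (simp add: sum.atLeastLessThan_concat[symmetric] lessThan_atLeast0 add.commute)
  also have "(\<Sum>K\<in>{m * n..<m * n + n}. f K) = (\<Sum>j<n. f (m * n + j))"
    using sum.shift_bounds_nat_ivl[of f 0 "m * n" n] by (simp add: lessThan_atLeast0 add.commute)
  finally show ?case
    using Suc by simp
qed simp

lemma unitary_kron_cmat:
  assumes U1: "unitary m U1" and U2: "unitary n U2"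
  shows "unitary (m * n) (kron_cmat n U1 U2)"
  unfolding unitary_def
proof (intro allI impI)
  fix K K' assume K: "K < m * n" and K': "K' < m * n"
  then have n: "n > 0"
    by (cases n) auto
  have div: "K div n < m" "K' div n < m" and mod: "K mod n < n" "K' mod n < n"
    using K K' n by (auto simp: less_mult_imp_div_less)
  have "(\<Sum>r<m * n. cnj (kron_cmat n U1 U2 r K) * kron_cmat n U1 U2 r K')
      = (\<Sum>i<m. cnj (U1 i (K div n)) * U1 i (K' div n)) * (\<Sum>j<n. cnj (U2 j (K mod n)) * U2 j (K' mod n))"
    unfolding sum_lessThan_mult kron_cmat_def sum_product
    by (intro sum.cong refl) (simp add: mult_ac)
  also have "\<dots> = (if K div n = K' div n \<and> K mod n = K' mod n then 1 else 0)"
    by (simp add: unitaryD[OF U1 div] unitaryD[OF U2 mod])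
  also have "\<dots> = (if K = K' then 1 else 0)"
    by (metis div_mult_mod_eq)
  finally show "(\<Sum>r<m * n. cnj (kron_cmat n U1 U2 r K) * kron_cmat n U1 U2 r K') = (if K = K' then 1 else 0)" .
qed

lemma schmidt_form_kron:
  assumes S1: "schmidt_form m M U1 \<sigma>1 V1" and S2: "schmidt_form n L U2 \<sigma>2 V2"
  shows "schmidt_form (m * n) (kron n M L) (kron_cmat n U1 U2)
           (\<lambda>K. \<sigma>1 (K div n) * \<sigma>2 (K mod n)) (kron_cmat n V1 V2)"
  unfolding schmidt_form_def
proof (intro allI impI)
  fix r c assume r: "r < m * n" and c: "c < m * n"
  then have n: "n > 0"
    by (cases n) auto
  have "r div n < m" "c div n < m" "r mod n < n" "c mod n < n"
    using r c n by (auto simp: less_mult_imp_div_less)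
  then have "kron n M L r c = (\<Sum>k<m. U1 (r div n) k * complex_of_real (\<sigma>1 k) * V1 (c div n) k) *
      (\<Sum>k'<n. U2 (r mod n) k' * complex_of_real (\<sigma>2 k') * V2 (c mod n) k')"
    using S1 S2 unfolding kron_def schmidt_form_def by simp
  also have "\<dots> = (\<Sum>k<m. \<Sum>k'<n. (U1 (r div n) k * U2 (r mod n) k') *
      complex_of_real (\<sigma>1 k * \<sigma>2 k') * (V1 (c div n) k * V2 (c mod n) k'))"
    by (simp add: sum_product mult_ac)
  also have "\<dots> = (\<Sum>K<m * n. kron_cmat n U1 U2 r K *
      complex_of_real (\<sigma>1 (K div n) * \<sigma>2 (K mod n)) * kron_cmat n V1 V2 c K)"
    unfolding sum_lessThan_mult kron_cmat_def using n by simp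
  finally show "kron n M L r c = (\<Sum>K<m * n. kron_cmat n U1 U2 r K *
      complex_of_real (\<sigma>1 (K div n) * \<sigma>2 (K mod n)) * kron_cmat n V1 V2 c K)" .
qed

lemma schmidt_sq_kron:
  assumes "schmidt_sq m M p" and "schmidt_sq n L q"
  shows "schmidt_sq (m * n) (kron n M L) (\<lambda>K. p (K div n) * q (K mod n))"
proof -
  obtain U1 V1 where U1: "unitary m U1" "unitary m V1"
    and S1: "schmidt_form m M U1 (\<lambda>k. sqrt (p k)) V1" and p: "\<forall>k<m. p k \<ge> 0"
    using assms(1) unfolding schmidt_sq_iff by blast
  obtain U2 V2 where U2: "unitary n U2" "unitary n V2"
    and S2: "schmidt_form n L U2 (\<lambda>k. sqrt (q k)) V2" and q: "\<forall>k<n. q k \<ge> 0"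
    using assms(2) unfolding schmidt_sq_iff by blast
  have nonneg: "\<forall>K<m * n. p (K div n) * q (K mod n) \<ge> 0"
  proof (intro allI impI)
    fix K assume K: "K < m * n"
    then have "n > 0"
      by (cases n) auto
    with K p q show "p (K div n) * q (K mod n) \<ge> 0"
      by (simp add: less_mult_imp_div_less)
  qed
  show ?thesis
    unfolding schmidt_sq_iff
    using nonneg schmidt_form_kron[OF S1 S2] unitary_kron_cmat[OF U1(1) U2(1)]
      unitary_kron_cmat[OF U1(2) U2(2)]
    by (auto simp: real_sqrt_mult)
qed

section \<open>Positive reals are determined by their power sums\<close>

lemma power_sums_zero_imp_zero:
  fixes W :: "real set" and c :: "real \<Rightarrow> real"
  assumes "finite W" and "\<forall>w\<in>W. w > 0" and "\<forall>k\<ge>1. (\<Sum>w\<in>W. c w * w ^ k) = 0"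
  shows "\<forall>w\<in>W. c w = 0"
  using assms
proof (induction W rule: finite_linorder_max_induct)
  case (insert b W)
  have b: "b > 0" and pos: "\<forall>w\<in>W. 0 < w / b \<and> w / b < 1"
    using insert.hyps(2) insert.prems(1) by auto
  have "b \<notin> W"
    using insert.hyps(2) by auto
  then have eq: "(\<Sum>w\<in>W. c w * w ^ k) = - c b * b ^ k" if "k \<ge> 1" for k
    using insert.prems(2) that insert.hyps(1) by (simp add: add_eq_0_iff)
  txt \<open>Divided by \<open>b ^ k\<close>, the terms of the smaller elements vanish as \<open>k \<rightarrow> \<infinity>\<close>.\<close>
  have "(\<lambda>k. \<Sum>w\<in>W. c w * (w / b) ^ Suc k) \<longlonglongrightarrow> 0"
    using pos by (intro tendsto_null_sum tendsto_mult_right_zero LIMSEQ_Suc LIMSEQ_power_zero) auto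
  moreover have "(\<Sum>w\<in>W. c w * (w / b) ^ Suc k) = - c b" for k
    using eq[of "Suc k"] b by (simp add: sum_divide_distrib[symmetric] power_divide)
  ultimately have "c b = 0"
    using LIMSEQ_unique by fastforce
  with insert show ?case
    using eq by auto
qed simp

lemma sum_by_fibres:
  fixes u :: "'a \<Rightarrow> real" and h :: "real \<Rightarrow> real"
  assumes "finite I" and "finite W" and "u ` I \<subseteq> W"
  shows "(\<Sum>i\<in>I. h (u i)) = (\<Sum>w\<in>W. h w * real (card {i\<in>I. u i = w}))"
proof -
  have "(\<Sum>i\<in>I. h (u i)) = (\<Sum>w\<in>u ` I. \<Sum>i\<in>{x\<in>I. u x = w}. h (u i))"
    by (rule sum.image_gen[OF assms(1)])
  also have "\<dots> = (\<Sum>w\<in>u ` I. h w * real (card {i\<in>I. u i = w}))"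
    by (intro sum.cong refl) simp
  also have "\<dots> = (\<Sum>w\<in>W. h w * real (card {i\<in>I. u i = w}))"
    using assms by (intro sum.mono_neutral_left) (auto simp: card_gt_0_iff)
  finally show ?thesis .
qed

lemma power_sums_eq_imp_sums_eq:
  fixes u :: "'a \<Rightarrow> real" and v :: "'b \<Rightarrow> real" and h :: "real \<Rightarrow> real"
  assumes I: "finite I" and J: "finite J" and u: "\<forall>i\<in>I. u i > 0" and v: "\<forall>j\<in>J. v j > 0"
    and power_sums: "\<forall>k\<ge>1. (\<Sum>i\<in>I. u i ^ k) = (\<Sum>j\<in>J. v j ^ k)"
  shows "(\<Sum>i\<in>I. h (u i)) = (\<Sum>j\<in>J. h (v j))"
proof -
  let ?W = "u ` I \<union> v ` J"
  have W: "finite ?W"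
    using I J by auto
  define c where "c w = real (card {i\<in>I. u i = w}) - real (card {j\<in>J. v j = w})" for w
  have sums: "(\<Sum>i\<in>I. g (u i)) - (\<Sum>j\<in>J. g (v j)) = (\<Sum>w\<in>?W. c w * g w)" for g
    using sum_by_fibres[OF I W, of u g] sum_by_fibres[OF J W, of v g]
    by (auto simp: c_def algebra_simps sum_subtractf)
  have "\<forall>k\<ge>1. (\<Sum>w\<in>?W. c w * w ^ k) = 0"
  proof (intro allI impI)
    fix k :: nat assume "k \<ge> 1"
    then show "(\<Sum>w\<in>?W. c w * w ^ k) = 0"
      using sums[of "\<lambda>w. w ^ k"] power_sums by simp
  qed
  then have "\<forall>w\<in>?W. c w = 0"
    using power_sums_zero_imp_zero[OF W] u v by blast
  then show ?thesis
    using sums[of h] by simp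
qed

lemma schmidt_sq_local_unitary_invariant:
  fixes h :: "real \<Rightarrow> real"
  assumes S: "schmidt_sq n C p" and S': "schmidt_sq n C' p'"
    and pos: "\<forall>l<n. p l > 0" "\<forall>l<n. p' l > 0"
    and UA: "unitary n UA" and UB: "unitary n UB"
    and L: "\<forall>r<n. \<forall>c<n. local_apply n n UA UB C r c = C' r c"
  shows "(\<Sum>l<n. h (p l)) = (\<Sum>l<n. h (p' l))"
  using pos schmidt_sq_local_unitary_power_sums[OF S S' UA UB L]
  by (intro power_sums_eq_imp_sums_eq[where I = "{..<n}" and J = "{..<n}" and u = p and v = p']) auto

section \<open>Two shifted pairs of multisets\<close>

definition parity_sign :: "int \<Rightarrow> int" where
  "parity_sign k = (if even k then 1 else -1)"

lemma parity_sign_diff: "parity_sign (k - j) = (if even j then parity_sign k else - parity_sign k)"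
  unfolding parity_sign_def by auto

lemma odd_sum_parity_sign_iff:
  fixes d :: nat
  shows "odd (\<Sum>j<d. parity_sign (f j)) \<longleftrightarrow> odd d"
  by (induction d) (auto simp: parity_sign_def)

lemma abs_sum_parity_sign_le:
  fixes d :: nat
  shows "\<bar>\<Sum>j<d. parity_sign (f j)\<bar> \<le> int d"
proof -
  have "\<bar>parity_sign k\<bar> = 1" for k
    by (simp add: parity_sign_def)
  then show ?thesis
    using sum_abs[of "\<lambda>j. parity_sign (f j)" "{..<d}"] by simp
qed

definition lattice_point :: "real \<Rightarrow> real \<Rightarrow> real \<Rightarrow> bool" where
  "lattice_point s t x \<longleftrightarrow> (\<exists>i j :: int. x = of_int i * s + of_int j * t)"

lemma lattice_point_diff_iff:
  "lattice_point s t (x - (of_int i * s + of_int j * t)) \<longleftrightarrow> lattice_point s t x"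
proof
  assume "lattice_point s t (x - (of_int i * s + of_int j * t))"
  then obtain i' j' :: int where "x - (of_int i * s + of_int j * t) = of_int i' * s + of_int j' * t"
    unfolding lattice_point_def by blast
  then have "x = of_int (i' + i) * s + of_int (j' + j) * t"
    by (simp add: algebra_simps)
  then show "lattice_point s t x"
    unfolding lattice_point_def by blast
next
  assume "lattice_point s t x"
  then obtain i' j' :: int where "x = of_int i' * s + of_int j' * t"
    unfolding lattice_point_def by blast
  then have "x - (of_int i * s + of_int j * t) = of_int (i' - i) * s + of_int (j' - j) * t"
    by (simp add: algebra_simps)
  then show "lattice_point s t (x - (of_int i * s + of_int j * t))"
    unfolding lattice_point_def by blast
qed

lemma coset_representative_exists:
  fixes s t :: real
  obtains rep :: "real \<Rightarrow> real" where "\<And>w. lattice_point s t (rep w - w)"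
    and "\<And>w i j. rep (w + (of_int i * s + of_int j * t)) = rep w"
proof
  define rep where "rep w = (SOME r. lattice_point s t (r - w))" for w
  have "lattice_point s t 0"
    unfolding lattice_point_def by (intro exI[of _ 0]) simp
  show "lattice_point s t (rep w - w)" for w
    unfolding rep_def
    by (rule someI[of "\<lambda>r. lattice_point s t (r - w)" w]) (simp add: \<open>lattice_point s t 0\<close>)
  show "rep (w + (of_int i * s + of_int j * t)) = rep w" for w i j
  proof -
    have "lattice_point s t (r - (w + (of_int i * s + of_int j * t))) \<longleftrightarrow> lattice_point s t (r - w)" for r
      using lattice_point_diff_iff[of s t "r - w" i j] by (simp add: algebra_simps)
    then show ?thesis
      unfolding rep_def by simp
  qed
qed

lemma lattice_homomorphism_exists:
  fixes s t :: real and p q :: int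
  assumes rel: "\<And>i j :: int. of_int i * s + of_int j * t = 0 \<Longrightarrow> i * p + j * q = 0"
  obtains \<phi> :: "real \<Rightarrow> int" where "\<And>i j. \<phi> (of_int i * s + of_int j * t) = i * p + j * q"
proof
  define \<phi> where
    "\<phi> x = (SOME k. \<exists>i j :: int. x = of_int i * s + of_int j * t \<and> k = i * p + j * q)" for x
  show "\<phi> (of_int i * s + of_int j * t) = i * p + j * q" for i j
    unfolding \<phi>_def
  proof (rule some_equality)
    fix k assume "\<exists>i' j' :: int. of_int i * s + of_int j * t = of_int i' * s + of_int j' * t \<and> k = i' * p + j' * q"
    then obtain i' j' :: int where "of_int (i - i') * s + of_int (j - j') * t = 0" and "k = i' * p + j' * q"
      by (auto simp: algebra_simps)
    then show "k = i * p + j * q"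
      using rel[of "i - i'" "j - j'"] by (simp add: algebra_simps)
  qed blast
qed

lemma shift_height_exists:
  fixes s t :: real and p q :: int
  assumes rel: "\<And>i j :: int. of_int i * s + of_int j * t = 0 \<Longrightarrow> i * p + j * q = 0"
  obtains N :: "real \<Rightarrow> int" where "\<And>w. N (w + s) = N w - p" and "\<And>w. N (w + t) = N w - q"
proof -
  obtain \<phi> where \<phi>: "\<And>i j. \<phi> (of_int i * s + of_int j * t) = i * p + j * q"
    using lattice_homomorphism_exists[OF rel] by blast
  obtain rep where rep: "\<And>w. lattice_point s t (rep w - w)"
    and rep_eq: "\<And>w i j. rep (w + (of_int i * s + of_int j * t)) = rep w"
    using coset_representative_exists by blast
  define N where "N w = \<phi> (rep w - w)" for w
  have N_shift: "N (w + (of_int i * s + of_int j * t)) = N w - (i * p + j * q)" for w i j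
  proof -
    obtain i' j' :: int where offset: "rep w - w = of_int i' * s + of_int j' * t"
      using rep unfolding lattice_point_def by blast
    then have "rep w - (w + (of_int i * s + of_int j * t)) = of_int (i' - i) * s + of_int (j' - j) * t"
      by (simp add: algebra_simps)
    then have "N (w + (of_int i * s + of_int j * t)) = (i' - i) * p + (j' - j) * q"
      unfolding N_def rep_eq by (simp only: \<phi>)
    moreover have "N w = i' * p + j' * q"
      unfolding N_def offset by (rule \<phi>)
    ultimately show ?thesis
      by (simp add: algebra_simps)
  qed
  show thesis
    by (rule that) (use N_shift[of _ 1 0] N_shift[of _ 0 1] in simp_all)
qed

lemma sum_shifted_pairs_parity_sign:
  fixes N :: "real \<Rightarrow> int" and l :: "nat \<Rightarrow> real" and p :: int
  assumes Ns: "\<And>w. N (w + s) = N w - p"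
  shows "(\<Sum>j<d. parity_sign (N (l j)) + parity_sign (N (l j + s)))
       = (if even p then 2 * (\<Sum>j<d. parity_sign (N (l j))) else 0)"
    and "odd p \<Longrightarrow> (\<Sum>j<d. N (l j) * parity_sign (N (l j)) + N (l j + s) * parity_sign (N (l j + s)))
       = p * (\<Sum>j<d. parity_sign (N (l j)))"
proof -
  show "(\<Sum>j<d. parity_sign (N (l j)) + parity_sign (N (l j + s)))
      = (if even p then 2 * (\<Sum>j<d. parity_sign (N (l j))) else 0)"
    by (cases "even p") (simp_all add: Ns parity_sign_diff sum_distrib_left)
  assume "odd p"
  then have "N x * parity_sign (N x) + N (x + s) * parity_sign (N (x + s)) = p * parity_sign (N x)" for x
    unfolding Ns by (simp add: parity_sign_diff algebra_simps)
  then show "(\<Sum>j<d. N (l j) * parity_sign (N (l j)) + N (l j + s) * parity_sign (N (l j + s)))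
      = p * (\<Sum>j<d. parity_sign (N (l j)))"
    by (simp add: sum_distrib_left)
qed

text \<open>Test the identity against \<open>(-1)\<^sup>N\<close> and \<open>N (-1)\<^sup>N\<close>.\<close>
lemma shift_height_parity:
  fixes N :: "real \<Rightarrow> int" and l m :: "nat \<Rightarrow> real" and p q :: int
  assumes d: "odd d" and cop: "coprime p q"
    and Ns: "\<And>w. N (w + s) = N w - p" and Nt: "\<And>w. N (w + t) = N w - q"
    and H: "\<And>h :: real \<Rightarrow> real. (\<Sum>j<d. h (l j) + h (l j + s)) = (\<Sum>j<d. h (m j) + h (m j + t))"
  shows "odd p \<and> odd q \<and> \<bar>q\<bar> \<le> int d"
proof -
  have H_int: "(\<Sum>j<d. f (l j) + f (l j + s)) = (\<Sum>j<d. f (m j) + f (m j + t))" for f :: "real \<Rightarrow> int"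
  proof -
    have "real_of_int (\<Sum>j<d. f (l j) + f (l j + s)) = real_of_int (\<Sum>j<d. f (m j) + f (m j + t))"
      using H[of "\<lambda>x. real_of_int (f x)"] by simp
    then show ?thesis
      by (simp only: of_int_eq_iff)
  qed
  define A where "A = (\<Sum>j<d. parity_sign (N (l j)))"
  define B where "B = (\<Sum>j<d. parity_sign (N (m j)))"
  have A: "odd A" and B: "odd B"
    using d by (simp_all add: A_def B_def odd_sum_parity_sign_iff)
  note sums_l = sum_shifted_pairs_parity_sign
      [where N = N and s = s and p = p and l = l and d = d, OF Ns, folded A_def]
    and sums_m = sum_shifted_pairs_parity_sign
      [where N = N and s = t and p = q and l = m and d = d, OF Nt, folded B_def]
  have "even p \<longleftrightarrow> even q"
    using H_int[of "\<lambda>x. parity_sign (N x)"] sums_l(1) sums_m(1) A B by (auto split: if_splits)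
  moreover have "\<not> (even p \<and> even q)"
    using cop coprime_common_divisor[of p q 2] by auto
  ultimately have p: "odd p" and q: "odd q"
    by auto
  have "p * A = q * B"
    using H_int[of "\<lambda>x. N x * parity_sign (N x)"] sums_l(2)[OF p] sums_m(2)[OF q] by simp
  then have "q dvd p * A"
    by simp
  moreover have "coprime q p"
    using cop by (simp add: coprime_commute)
  ultimately have "q dvd A"
    by (simp add: coprime_dvd_mult_right_iff)
  then have "\<bar>q\<bar> \<le> \<bar>A\<bar>"
    using A by (intro dvd_imp_le_int) auto
  also have "\<dots> \<le> int d"
    unfolding A_def by (rule abs_sum_parity_sign_le)
  finally show ?thesis
    using p q by simp
qed

text \<open>For irrational \<open>t / s\<close> a height that ignores \<open>s\<close> and counts \<open>t\<close> would make the even shift \<open>0\<close>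
  odd.\<close>
lemma shifted_pairs_ratio_rational:
  fixes s t :: real and l m :: "nat \<Rightarrow> real"
  assumes s: "0 < s" and d: "odd d"
    and H: "\<And>h :: real \<Rightarrow> real. (\<Sum>j<d. h (l j) + h (l j + s)) = (\<Sum>j<d. h (m j) + h (m j + t))"
  shows "t / s \<in> \<rat>"
proof (rule ccontr)
  assume irrational: "t / s \<notin> \<rat>"
  have rel: "i * 0 + j * 1 = 0" if "of_int i * s + of_int j * t = 0" for i j :: int
  proof (rule ccontr)
    assume "i * 0 + j * 1 \<noteq> 0"
    then have "t / s = of_int (- i) / of_int j"
      using that s by (simp add: field_simps)
    then show False
      using irrational by simp
  qed
  obtain N :: "real \<Rightarrow> int" where "\<And>w. N (w + s) = N w - 0" "\<And>w. N (w + t) = N w - 1"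
    using shift_height_exists[OF rel] by blast
  then have "odd (0::int)"
    using shift_height_parity[OF d _ _ _ H, where p = 0 and q = 1 and N = N] by simp
  then show False
    by simp
qed

lemma shifted_pairs_ratio:
  fixes s t :: real and l m :: "nat \<Rightarrow> real"
  assumes s: "0 < s" and st: "s < t" and d: "odd d"
    and H: "\<And>h :: real \<Rightarrow> real. (\<Sum>j<d. h (l j) + h (l j + s)) = (\<Sum>j<d. h (m j) + h (m j + t))"
  obtains p q :: nat where "odd p" "odd q" "p < q" "q \<le> d" "t = s * q / p"
proof -
  obtain q p :: nat where p: "p \<noteq> 0" and ratio: "\<bar>t / s\<bar> = q / p" and cop: "coprime q p"
    using shifted_pairs_ratio_rational[OF s d H] by (rule Rats_abs_nat_div_natE)
  have t: "t = s * q / p"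
    using ratio s st p by (simp add: field_simps)
  have rel: "i * int p + j * int q = 0" if "of_int i * s + of_int j * t = 0" for i j :: int
  proof -
    have "real_of_int i * real p + real_of_int j * real q = (of_int i * s + of_int j * t) * p / s"
      using s p unfolding t by (simp add: field_simps)
    then have "real_of_int (i * int p + j * int q) = 0"
      using that by simp
    then show ?thesis
      by (simp only: of_int_eq_0_iff)
  qed
  obtain N :: "real \<Rightarrow> int" where "\<And>w. N (w + s) = N w - int p" "\<And>w. N (w + t) = N w - int q"
    using shift_height_exists[OF rel] by blast
  then have "odd (int p) \<and> odd (int q) \<and> \<bar>int q\<bar> \<le> int d"
    using cop by (intro shift_height_parity[OF d _ _ _ H]) (simp_all add: coprime_commute)
  moreover have "p < q"
    using s st p unfolding t by (simp add: field_simps)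
  ultimately show ?thesis
    using that[of p q] t by simp
qed

section \<open>Necessity\<close>

definition qubit_schmidt_sq :: "real \<Rightarrow> nat \<Rightarrow> real" where
  "qubit_schmidt_sq a = (\<lambda>k. if k = 0 then 1 / (1 + a) else a / (1 + a))"

lemma qubit_schmidt_sq_pos: "0 < a \<Longrightarrow> qubit_schmidt_sq a k > 0"
  by (simp add: qubit_schmidt_sq_def)

lemma kron_qubit_coeffs_pos:
  assumes "0 < a" and "\<forall>j<d. q j > 0"
  shows "\<forall>K<2 * d. qubit_schmidt_sq a (K div d) * q (K mod d) > 0"
proof (intro allI impI)
  fix K assume "K < 2 * d"
  then have "K mod d < d"
    by (cases d) auto
  then show "qubit_schmidt_sq a (K div d) * q (K mod d) > 0"
    using assms qubit_schmidt_sq_pos by simp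
qed

lemma sum_kron_qubit_coeffs_neg_ln:
  assumes a: "0 < a" and q: "\<forall>j<d. q j > 0"
  shows "(\<Sum>K<2 * d. h (- ln (qubit_schmidt_sq a (K div d) * q (K mod d))))
       = (\<Sum>j<d. h (- ln (q j / (1 + a))) + h (- ln (q j / (1 + a)) + - ln a))"
proof -
  have "(\<Sum>K<2 * d. h (- ln (qubit_schmidt_sq a (K div d) * q (K mod d))))
      = (\<Sum>j<d. h (- ln (qubit_schmidt_sq a 0 * q j)) + h (- ln (qubit_schmidt_sq a 1 * q j)))"
    unfolding sum_lessThan_mult by (simp add: numeral_2_eq_2 sum.distrib)
  also have "\<dots> = (\<Sum>j<d. h (- ln (q j / (1 + a))) + h (- ln (q j / (1 + a)) + - ln a))"
  proof (intro sum.cong refl)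
    fix j assume "j \<in> {..<d}"
    then have "q j / (1 + a) > 0"
      using q a by simp
    have "ln (qubit_schmidt_sq a 1 * q j) = ln (a * (q j / (1 + a)))"
      by (simp add: qubit_schmidt_sq_def)
    also have "\<dots> = ln a + ln (q j / (1 + a))"
      using a \<open>q j / (1 + a) > 0\<close> by (rule ln_mult_pos)
    finally have "ln (qubit_schmidt_sq a 1 * q j) = ln (q j / (1 + a)) + ln a"
      by simp
    then show "h (- ln (qubit_schmidt_sq a 0 * q j)) + h (- ln (qubit_schmidt_sq a 1 * q j))
        = h (- ln (q j / (1 + a))) + h (- ln (q j / (1 + a)) + - ln a)"
      by (simp add: qubit_schmidt_sq_def)
  qed
  finally show ?thesis .
qed

lemma local_equiv_imp_shifted_pairs:
  fixes d :: nat
  assumes a: "0 < a" "0 < abar"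
    and mu: "schmidt_sq 2 mu (qubit_schmidt_sq a)"
    and mubar: "schmidt_sq 2 mubar (qubit_schmidt_sq abar)"
    and lam: "full_schmidt_rank d lam" and lambar: "full_schmidt_rank d lambar"
    and UA: "unitary (2 * d) UA" and UB: "unitary (2 * d) UB"
    and L: "\<forall>r<2 * d. \<forall>c<2 * d.
              local_apply (2 * d) (2 * d) UA UB (kron d mu lam) r c = kron d mubar lambar r c"
  obtains q qb :: "nat \<Rightarrow> real" where
    "\<And>h :: real \<Rightarrow> real. (\<Sum>j<d. h (- ln (q j / (1 + a))) + h (- ln (q j / (1 + a)) + - ln a))
      = (\<Sum>j<d. h (- ln (qb j / (1 + abar))) + h (- ln (qb j / (1 + abar)) + - ln abar))"
proof -
  obtain q where q: "schmidt_sq d lam q" "\<forall>j<d. q j > 0"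
    using lam unfolding full_schmidt_rank_def by blast
  obtain qb where qb: "schmidt_sq d lambar qb" "\<forall>j<d. qb j > 0"
    using lambar unfolding full_schmidt_rank_def by blast
  have coeffs: "(\<Sum>K<2 * d. g (qubit_schmidt_sq a (K div d) * q (K mod d)))
      = (\<Sum>K<2 * d. g (qubit_schmidt_sq abar (K div d) * qb (K mod d)))" for g :: "real \<Rightarrow> real"
    using a q qb
    by (intro schmidt_sq_local_unitary_invariant[OF schmidt_sq_kron[OF mu q(1)]
          schmidt_sq_kron[OF mubar qb(1)] _ _ UA UB L] kron_qubit_coeffs_pos) auto
  show thesis
    using coeffs[of "\<lambda>x. h (- ln x)" for h] a q qb
    by (intro that[of q qb]) (simp add: sum_kron_qubit_coeffs_neg_ln)
qed

lemma local_equiv_imp_odd_ratio: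
  fixes d :: nat
  assumes a: "0 < abar" "abar < a" "a < 1"
    and mu: "schmidt_sq 2 mu (qubit_schmidt_sq a)"
    and mubar: "schmidt_sq 2 mubar (qubit_schmidt_sq abar)"
    and d: "odd d"
    and equiv: "\<exists>lam lambar UA UB.
           is_state d d lam \<and> is_state d d lambar \<and>
           full_schmidt_rank d lam \<and> full_schmidt_rank d lambar \<and>
           unitary (2 * d) UA \<and> unitary (2 * d) UB \<and>
           (\<forall>r<2 * d. \<forall>c<2 * d.
              local_apply (2 * d) (2 * d) UA UB (kron d mu lam) r c = kron d mubar lambar r c)"
  shows "\<exists>d1 d2 :: nat. odd d1 \<and> odd d2 \<and> d \<ge> d1 \<and> d1 > d2 \<and> d2 \<ge> 1 \<and>
           abar = a powr (real d1 / real d2)"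
proof -
  obtain lam lambar UA UB where lam: "full_schmidt_rank d lam" and lambar: "full_schmidt_rank d lambar"
    and UA: "unitary (2 * d) UA" and UB: "unitary (2 * d) UB"
    and L: "\<forall>r<2 * d. \<forall>c<2 * d.
              local_apply (2 * d) (2 * d) UA UB (kron d mu lam) r c = kron d mubar lambar r c"
    using equiv by blast
  have "0 < a"
    using a by simp
  obtain q qb :: "nat \<Rightarrow> real" where
    H: "\<And>h :: real \<Rightarrow> real. (\<Sum>j<d. h (- ln (q j / (1 + a))) + h (- ln (q j / (1 + a)) + - ln a))
      = (\<Sum>j<d. h (- ln (qb j / (1 + abar))) + h (- ln (qb j / (1 + abar)) + - ln abar))"
    using local_equiv_imp_shifted_pairs[OF \<open>0 < a\<close> a(1) mu mubar lam lambar UA UB L] by blast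
  have st: "0 < - ln a" "- ln a < - ln abar"
    using a by simp_all
  obtain d2 d1 :: nat where d12: "odd d2" "odd d1" "d2 < d1" "d1 \<le> d"
    and ratio: "- ln abar = - ln a * d1 / d2"
    by (rule shifted_pairs_ratio[OF st d H])
  have "abar = exp (ln abar)"
    using a by simp
  also have "ln abar = d1 / d2 * ln a"
    using ratio by simp
  finally have "abar = exp (d1 / d2 * ln a)" .
  moreover have "a \<noteq> 0"
    using a by simp
  ultimately have "abar = a powr (d1 / d2)"
    by (simp add: powr_def)
  moreover have "d2 \<ge> 1"
    using odd_pos[OF d12(1)] by simp
  ultimately show ?thesis
    using d12 by blast
qed

section \<open>Sufficiency\<close>

definition diag_state :: "(nat \<Rightarrow> real) \<Rightarrow> cmat" where
  "diag_state w = (\<lambda>i j. if i = j then complex_of_real (sqrt (w i)) else 0)"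

lemma schmidt_sq_diag_state:
  assumes "\<forall>k<d. w k \<ge> 0"
  shows "schmidt_sq d (diag_state w) w"
proof -
  have "schmidt_form d (diag_state w) cmat_id (\<lambda>k. sqrt (w k)) cmat_id"
    unfolding schmidt_form_def diag_state_def cmat_id_def
    by (auto simp: if_distrib[of "\<lambda>x. x * _"] cong: if_cong)
  then show ?thesis
    unfolding schmidt_sq_iff using assms unitary_cmat_id by blast
qed

lemma is_state_diag_state:
  assumes "\<forall>k<d. w k \<ge> 0" and "(\<Sum>k<d. w k) = 1"
  shows "is_state d d (diag_state w)"
proof -
  have "(\<Sum>j<d. (cmod (diag_state w i j))\<^sup>2) = w i" if "i < d" for i
  proof -
    have "(\<Sum>j<d. (cmod (diag_state w i j))\<^sup>2) = (\<Sum>j<d. if j = i then w i else 0)"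
      using assms(1) that by (intro sum.cong refl) (auto simp: diag_state_def)
    then show ?thesis
      using that by simp
  qed
  then show ?thesis
    unfolding is_state_def using assms(2) by simp
qed

definition perm_cmat :: "(nat \<Rightarrow> nat) \<Rightarrow> cmat" where
  "perm_cmat \<pi> = (\<lambda>k K. if k = \<pi> K then 1 else 0)"

lemma unitary_perm_cmat:
  assumes \<pi>: "\<pi> permutes {..<n}"
  shows "unitary n (perm_cmat \<pi>)"
  unfolding unitary_def
proof (intro allI impI)
  fix i j assume "i < n" "j < n"
  have "(\<Sum>k<n. cnj (perm_cmat \<pi> k i) * perm_cmat \<pi> k j) = (\<Sum>k<n. if k = \<pi> i then perm_cmat \<pi> k j else 0)"
    by (intro sum.cong refl) (simp add: perm_cmat_def)
  also have "\<dots> = (if \<pi> i = \<pi> j then 1 else 0)"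
    using permutes_in_image[OF \<pi>] \<open>i < n\<close> by (simp add: perm_cmat_def)
  finally show "(\<Sum>k<n. cnj (perm_cmat \<pi> k i) * perm_cmat \<pi> k j) = (if i = j then 1 else 0)"
    using permutes_inj[OF \<pi>] by (simp add: inj_eq)
qed

lemma cmat_mult_perm_cmat:
  assumes "\<pi> permutes {..<n}" and "K < n"
  shows "cmat_mult n X (perm_cmat \<pi>) r K = X r (\<pi> K)"
proof -
  have "cmat_mult n X (perm_cmat \<pi>) r K = (\<Sum>k<n. if k = \<pi> K then X r k else 0)"
    unfolding cmat_mult_def by (intro sum.cong refl) (simp add: perm_cmat_def)
  then show ?thesis
    using assms permutes_in_image[OF assms(1)] by simp
qed

text \<open>The local unitaries are \<open>A' Q A\<^sup>H\<close> and \<open>B' Q B\<^sup>H\<close>, with \<open>Q\<close> the permutation matrix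
  matching the two coefficient lists.\<close>
lemma schmidt_sq_mset_eq_imp_local_equiv:
  assumes S: "schmidt_sq n C p" and S': "schmidt_sq n C' p'"
    and eq: "mset (map p [0..<n]) = mset (map p' [0..<n])"
  obtains UA UB where "unitary n UA" "unitary n UB"
    "\<forall>r<n. \<forall>c<n. local_apply n n UA UB C r c = C' r c"
proof -
  obtain A B where A: "unitary n A" and B: "unitary n B"
    and SA: "schmidt_form n C A (\<lambda>k. sqrt (p k)) B"
    using S unfolding schmidt_sq_iff by blast
  obtain A' B' where A': "unitary n A'" and B': "unitary n B'"
    and SA': "schmidt_form n C' A' (\<lambda>k. sqrt (p' k)) B'"
    using S' unfolding schmidt_sq_iff by blast
  obtain \<pi> where \<pi>: "\<pi> permutes {..<n}" and perm: "permute_list \<pi> (map p' [0..<n]) = map p [0..<n]"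
    using mset_eq_permutation[OF eq] by auto
  have p\<pi>: "p k = p' (\<pi> k)" if "k < n" for k
  proof -
    have "p k = permute_list \<pi> (map p' [0..<n]) ! k"
      using that by (simp add: perm)
    also have "\<dots> = p' (\<pi> k)"
      using that \<pi> permutes_in_image[OF \<pi>, of k] by (simp add: permute_list_nth)
    finally show ?thesis .
  qed
  define Q where "Q = perm_cmat \<pi>"
  have Q: "unitary n Q" and mult_Q: "\<And>X r K. K < n \<Longrightarrow> cmat_mult n X Q r K = X r (\<pi> K)"
    unfolding Q_def using \<pi> by (simp_all add: unitary_perm_cmat cmat_mult_perm_cmat)
  define UA where "UA = cmat_mult n (cmat_mult n A' Q) (cmat_adj A)"
  define UB where "UB = cmat_mult n (cmat_mult n B' Q) (cmat_adj B)"
  have U: "unitary n UA" "unitary n UB"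
    unfolding UA_def UB_def using A B A' B' Q by (simp_all add: unitary_cmat_mult unitary_cmat_adj)
  have "\<forall>r<n. \<forall>c<n. local_apply n n UA UB C r c = C' r c"
  proof (intro allI impI)
    fix r c assume r: "r < n" and c: "c < n"
    have "local_apply n n UA UB C r c
        = (\<Sum>K<n. cmat_mult n UA A r K * complex_of_real (sqrt (p K)) * cmat_mult n UB B c K)"
      using schmidt_form_local_apply[OF SA, of UA UB] r c unfolding schmidt_form_def by blast
    also have "\<dots> = (\<Sum>K<n. A' r (\<pi> K) * complex_of_real (sqrt (p' (\<pi> K))) * B' c (\<pi> K))"
      unfolding UA_def UB_def
      by (intro sum.cong refl) (simp add: cmat_mult_adj_cancel A B mult_Q p\<pi>)
    also have "\<dots> = (\<Sum>k<n. A' r k * complex_of_real (sqrt (p' k)) * B' c k)"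
      using sum.permute[OF \<pi>, of "\<lambda>k. A' r k * complex_of_real (sqrt (p' k)) * B' c k"] by simp
    also have "\<dots> = C' r c"
      using SA' r c unfolding schmidt_form_def by simp
    finally show "local_apply n n UA UB C r c = C' r c" .
  qed
  then show thesis
    by (rule that[OF U])
qed

definition geometric_weights :: "real \<Rightarrow> nat list \<Rightarrow> nat \<Rightarrow> real" where
  "geometric_weights \<tau> xs j = \<tau> ^ (xs ! j) / (\<Sum>e\<leftarrow>xs. \<tau> ^ e)"

lemma geometric_weights_distribution:
  assumes "\<tau> > 0" and "length xs = d" and "d > 0"
  shows "\<forall>j<d. geometric_weights \<tau> xs j > 0" and "(\<Sum>j<d. geometric_weights \<tau> xs j) = 1"
proof -
  have Z: "(\<Sum>e\<leftarrow>xs. \<tau> ^ e) = (\<Sum>j<d. \<tau> ^ (xs ! j))"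
    using assms(2) by (simp add: sum_list_sum_nth atLeast0LessThan)
  moreover have "(\<Sum>j<d. \<tau> ^ (xs ! j)) > 0"
    using assms by (intro sum_pos) auto
  ultimately show "\<forall>j<d. geometric_weights \<tau> xs j > 0" and "(\<Sum>j<d. geometric_weights \<tau> xs j) = 1"
    using assms(1) by (simp_all add: geometric_weights_def sum_divide_distrib[symmetric])
qed

lemma geometric_diag_state:
  assumes "\<tau> > 0" and "length xs = d" and "d > 0"
  defines "w \<equiv> geometric_weights \<tau> xs"
  shows "schmidt_sq d (diag_state w) w" and "is_state d d (diag_state w)"
    and "full_schmidt_rank d (diag_state w)"
proof -
  have w: "\<forall>j<d. w j > 0" "(\<Sum>j<d. w j) = 1"
    unfolding w_def using geometric_weights_distribution[OF assms(1-3)] by blast+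
  then show S: "schmidt_sq d (diag_state w) w"
    by (simp add: schmidt_sq_diag_state less_imp_le)
  show "is_state d d (diag_state w)"
    using w by (simp add: is_state_diag_state less_imp_le)
  show "full_schmidt_rank d (diag_state w)"
    unfolding full_schmidt_rank_def using S w(1) by blast
qed

lemma mset_kron_qubit_geometric:
  fixes p :: nat
  assumes \<tau>: "\<tau> > 0" and len: "length xs = d"
  defines "E \<equiv> mset (xs @ map (\<lambda>x. x + p) xs)"
  shows "mset (map (\<lambda>K. qubit_schmidt_sq (\<tau> ^ p) (K div d) * geometric_weights \<tau> xs (K mod d)) [0..<2 * d])
       = image_mset (\<lambda>e. \<tau> ^ e / (\<Sum>e'\<in>#E. \<tau> ^ e')) E"
proof -
  define Z where "Z = (\<Sum>e\<leftarrow>xs. \<tau> ^ e)"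
  define g where "g = (\<lambda>e. \<tau> ^ e / ((1 + \<tau> ^ p) * Z))"
  have "(\<Sum>e'\<in>#E. \<tau> ^ e') = (\<Sum>e\<leftarrow>xs @ map (\<lambda>x. x + p) xs. \<tau> ^ e)"
    unfolding E_def by (metis mset_map sum_mset_sum_list)
  also have "\<dots> = Z + Z * \<tau> ^ p"
    unfolding Z_def by (simp add: power_add sum_list_mult_const comp_def)
  also have "\<dots> = (1 + \<tau> ^ p) * Z"
    by (simp add: algebra_simps)
  finally have total: "(\<Sum>e'\<in>#E. \<tau> ^ e') = (1 + \<tau> ^ p) * Z" .
  have map_nth_eq: "map (\<lambda>j. f (xs ! j)) [0..<d] = map f xs" for f :: "nat \<Rightarrow> real"
    using len by (simp add: list_eq_iff_nth_eq)
  define F where "F K = qubit_schmidt_sq (\<tau> ^ p) (K div d) * geometric_weights \<tau> xs (K mod d)" for K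
  have "Z = (\<Sum>i<d. \<tau> ^ (xs ! i))"
    using len by (simp add: Z_def sum_list_sum_nth atLeast0LessThan)
  then have "Z > 0" if "j < d" for j
    using that \<tau> by (auto intro!: sum_pos)
  then have "F j = g (xs ! j)" and "F (j + d) = g (xs ! j + p)" if "j < d" for j
    using that \<tau> unfolding F_def g_def geometric_weights_def qubit_schmidt_sq_def Z_def[symmetric]
    by (simp_all add: power_add field_simps)
  then have "map F [0..<d] = map (\<lambda>j. g (xs ! j)) [0..<d]"
    and "map (\<lambda>j. F (j + d)) [0..<d] = map (\<lambda>j. g (xs ! j + p)) [0..<d]"
    by (auto intro!: map_cong)
  moreover have "[0..<2 * d] = [0..<d] @ map (\<lambda>j. j + d) [0..<d]"
    using upt_add_eq_append[of 0 d d] map_add_upt[of d d] by (simp add: mult_2)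
  ultimately have "map F [0..<2 * d] = map (\<lambda>j. g (xs ! j)) [0..<d] @ map (\<lambda>j. g (xs ! j + p)) [0..<d]"
    by (simp add: comp_def)
  then show ?thesis
    unfolding F_def total map_nth_eq[of g] map_nth_eq[of "\<lambda>x. g (x + p)"]
    by (simp add: E_def g_def multiset.map_comp comp_def)
qed

definition arith_prog :: "nat \<Rightarrow> nat \<Rightarrow> nat multiset" where
  "arith_prog a n = mset (map (\<lambda>i. a + 2 * i) [0..<n])"

lemma arith_prog_add: "arith_prog a (n + m) = arith_prog a n + arith_prog (a + 2 * n) m"
  unfolding arith_prog_def by (induction m) (auto simp: algebra_simps)

text \<open>Exponents of \<open>\<tau>\<close> in the Schmidt coefficients of \<open>\<lambda>\<close> and \<open>\<lambda>bar\<close> when \<open>a = \<tau>\<^sup>p\<close> and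
  \<open>abar = \<tau>\<^sup>q\<close>; the \<open>m\<close> copies of \<open>{0, q}\<close> resp. \<open>{0, p}\<close> only pad the length to \<open>q + 2 m\<close>.\<close>
definition lambda_exponents :: "nat \<Rightarrow> nat \<Rightarrow> nat list" where
  "lambda_exponents q m = map (\<lambda>i. 2 * i) [0..<q] @ replicate m 0 @ replicate m q"

definition lambdabar_exponents :: "nat \<Rightarrow> nat \<Rightarrow> nat \<Rightarrow> nat list" where
  "lambdabar_exponents p q m = (let r = (q - p) div 2 in
     map (\<lambda>i. 2 * i) [0..<p] @ map (\<lambda>i. p + 2 * i) [0..<r] @ map (\<lambda>i. 2 * p + 2 * i) [0..<r]
     @ replicate m 0 @ replicate m p)"

lemma length_lambda_exponents: "length (lambda_exponents q m) = q + 2 * m"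
  unfolding lambda_exponents_def by simp

lemma length_lambdabar_exponents:
  "odd p \<Longrightarrow> odd q \<Longrightarrow> p \<le> q \<Longrightarrow> length (lambdabar_exponents p q m) = q + 2 * m"
  unfolding lambdabar_exponents_def Let_def by simp presburger

lemma mset_shifted_exponents_eq:
  assumes "odd p" "odd q" "p \<le> q"
  shows "mset (lambda_exponents q m @ map (\<lambda>x. x + p) (lambda_exponents q m))
       = mset (lambdabar_exponents p q m @ map (\<lambda>y. y + q) (lambdabar_exponents p q m))"
proof -
  define r where "r = (q - p) div 2"
  have q: "q = p + 2 * r"
    unfolding r_def using assms by presburger
  have times2: "(\<lambda>i::nat. i * 2) = (*) 2"
    by auto
  have lhs: "mset (lambda_exponents q m @ map (\<lambda>x. x + p) (lambda_exponents q m)) =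
      arith_prog 0 q + arith_prog p q + replicate_mset m 0 + replicate_mset m q
      + replicate_mset m p + replicate_mset m (q + p)"
    unfolding lambda_exponents_def
    by (simp add: arith_prog_def multiset.map_comp comp_def add_ac algebra_simps times2)
  have rhs: "mset (lambdabar_exponents p q m @ map (\<lambda>y. y + q) (lambdabar_exponents p q m)) =
      arith_prog 0 p + arith_prog p r + arith_prog (2 * p) r + arith_prog q p
      + arith_prog (p + q) r + arith_prog (2 * p + q) r
      + replicate_mset m 0 + replicate_mset m p + replicate_mset m q + replicate_mset m (p + q)"
    unfolding lambdabar_exponents_def Let_def r_def[symmetric]
    by (simp add: arith_prog_def multiset.map_comp comp_def add_ac algebra_simps times2)
  have "arith_prog (2 * p) (2 * r) = arith_prog (2 * p) r + arith_prog (2 * p + 2 * r) r"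
    using arith_prog_add[of "2 * p" r r] by (simp add: mult_2)
  then have "arith_prog 0 q = arith_prog 0 p + arith_prog (2 * p) r + arith_prog (p + q) r"
    using arith_prog_add[of 0 p "2 * r"] q by (simp add: algebra_simps)
  moreover have "arith_prog p q = arith_prog p r + arith_prog q p + arith_prog (2 * p + q) r"
  proof -
    have e: "q = r + (p + r)"
      using q by simp
    show ?thesis
      unfolding e arith_prog_add using arith_prog_add[of "p + 2 * r" p r] q
      by (simp add: algebra_simps mult_2_right)
  qed
  ultimately show ?thesis
    using lhs rhs by (simp add: add_ac)
qed

lemma odd_ratio_imp_local_equiv:
  fixes d d1 d2 :: nat
  assumes a: "0 < a"
    and mu: "schmidt_sq 2 mu (qubit_schmidt_sq a)"
    and mubar: "schmidt_sq 2 mubar (qubit_schmidt_sq abar)"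
    and d: "odd d"
    and ratio: "\<exists>d1 d2 :: nat. odd d1 \<and> odd d2 \<and> d \<ge> d1 \<and> d1 > d2 \<and> d2 \<ge> 1 \<and>
           abar = a powr (real d1 / real d2)"
  shows "\<exists>lam lambar UA UB.
           is_state d d lam \<and> is_state d d lambar \<and>
           full_schmidt_rank d lam \<and> full_schmidt_rank d lambar \<and>
           unitary (2 * d) UA \<and> unitary (2 * d) UB \<and>
           (\<forall>r<2 * d. \<forall>c<2 * d.
              local_apply (2 * d) (2 * d) UA UB (kron d mu lam) r c = kron d mubar lambar r c)"
proof -
  obtain d1 d2 :: nat where d12: "odd d1" "odd d2" "d2 < d1" "d1 \<le> d" and abar: "abar = a powr (d1 / d2)"
    using ratio by blast
  define \<tau> where "\<tau> = a powr (1 / d2)"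
  have \<tau>: "\<tau> > 0"
    unfolding \<tau>_def using a by simp
  have "d2 > 0"
    using \<open>odd d2\<close> by (rule odd_pos)
  then have \<tau>_pow: "\<tau> ^ d2 = a" "\<tau> ^ d1 = abar"
    unfolding \<tau>_def abar using a by (simp_all add: powr_realpow[symmetric] powr_powr)
  define m where "m = (d - d1) div 2"
  define xs where "xs = lambda_exponents d1 m"
  define ys where "ys = lambdabar_exponents d2 d1 m"
  have len: "length xs = d" "length ys = d"
    unfolding xs_def ys_def m_def using d d12
    by (simp_all add: length_lambda_exponents length_lambdabar_exponents)
  have "d > 0"
    using d by presburger
  note geo = geometric_diag_state[OF \<tau> len(1) this] and geobar = geometric_diag_state[OF \<tau> len(2) this]
  have E: "mset (xs @ map (\<lambda>x. x + d2) xs) = mset (ys @ map (\<lambda>y. y + d1) ys)"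
    unfolding xs_def ys_def using d12 by (intro mset_shifted_exponents_eq) auto
  have "mset (map (\<lambda>K. qubit_schmidt_sq a (K div d) * geometric_weights \<tau> xs (K mod d)) [0..<2 * d])
      = mset (map (\<lambda>K. qubit_schmidt_sq abar (K div d) * geometric_weights \<tau> ys (K mod d)) [0..<2 * d])"
    using mset_kron_qubit_geometric[OF \<tau> len(1), of d2] mset_kron_qubit_geometric[OF \<tau> len(2), of d1]
    unfolding \<tau>_pow E by simp
  then obtain UA UB where U: "unitary (2 * d) UA" "unitary (2 * d) UB"
    "\<forall>r<2 * d. \<forall>c<2 * d.
       local_apply (2 * d) (2 * d) UA UB (kron d mu (diag_state (geometric_weights \<tau> xs))) r c
         = kron d mubar (diag_state (geometric_weights \<tau> ys)) r c"
    by (rule schmidt_sq_mset_eq_imp_local_equiv[OF schmidt_sq_kron[OF mu geo(1)]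
          schmidt_sq_kron[OF mubar geobar(1)]])
  show ?thesis
    by (rule exI[of _ "diag_state (geometric_weights \<tau> xs)"],
        rule exI[of _ "diag_state (geometric_weights \<tau> ys)"], rule exI[of _ UA], rule exI[of _ UB])
      (simp add: geo geobar U)
qed

theorem theorem6:
  fixes mu mubar :: cmat and a abar :: real and d :: nat
  assumes "0 < a" "a < 1" "0 < abar" "abar < 1" "a > abar"
    and "schmidt_sq 2 mu (\<lambda>k. if k = 0 then 1 / (1 + a) else a / (1 + a))"
    and "schmidt_sq 2 mubar (\<lambda>k. if k = 0 then 1 / (1 + abar) else abar / (1 + abar))"
    and "odd d" "d \<ge> 3"
  shows "(\<exists>lam lambar UA UB.
            is_state d d lam \<and> is_state d d lambar \<and>
            full_schmidt_rank d lam \<and> full_schmidt_rank d lambar \<and>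
            unitary (2 * d) UA \<and> unitary (2 * d) UB \<and>
            (\<forall>r < 2 * d. \<forall>c < 2 * d.
               local_apply (2 * d) (2 * d) UA UB (kron d mu lam) r c = kron d mubar lambar r c))
     \<longleftrightarrow>
         (\<exists>d1 d2 :: nat. odd d1 \<and> odd d2 \<and> d \<ge> d1 \<and> d1 > d2 \<and> d2 \<ge> 1 \<and>
            abar = a powr (real d1 / real d2))"
proof -
  note mu = assms(6)[folded qubit_schmidt_sq_def]
    and mubar = assms(7)[folded qubit_schmidt_sq_def]
  show ?thesis
    using local_equiv_imp_odd_ratio[OF assms(3,5,2) mu mubar assms(8)]
      odd_ratio_imp_local_equiv[OF assms(1) mu mubar assms(8)]
    by (rule iffI)
qed

end
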